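(* Let $a\neq0$, $b>0$, $d$ be integers with $d$ not a perfect square, $\alpha=a+b^2\sqrt d$, $N_\alpha=a^2-b^4d$ not a perfect square, $\varepsilon=(t+u\sqrt d)/2$ in the ring of integers of $\mathbb{Q}(\sqrt d)$ with $t,u$ nonzero integers, and let $x\ne0$, $y>0$ be integers with $x+y^2\sqrt d=\alpha\varepsilon^2$. Let $r_1'=tb^2+au+2by$ and $r_1''=tb^2+au-2by$. Then $\gcd(r_1',r_1'')$ is even, unless $N_\alpha\equiv1\pmod4$ and $4\mid d$. *)

theory Defs
  imports Complex_Main "HOL-Computational_Algebra.Polynomial"
begin

end

theory Submission
  imports Defs "HOL-Computational_Algebra.Nth_Powers"
begin

(* Comparing the coefficients of 1 and sqrt d in 4 (x + y^2 sqrt d) = (a + b^2 sqrt d) (t + u sqrt d)^2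
   gives 4 x = a (t^2 + u^2 d) + 2 b^2 d t u and 4 y^2 = 2 a t u + b^2 (t^2 + u^2 d).
   As r1' and r1'' differ from t b^2 + a u by 2 b y, it suffices that t b^2 + a u is even.
   Reading both identities modulo 4 and splitting on the parities of t and u shows that
   t b^2 + a u can only be odd when a is odd and 4 divides d, and then a^2 - b^4 d = 1 (mod 4). *)

lemma square_if_mult_square_eq_square:
  fixes d m n :: int
  assumes "d * m ^ 2 = n ^ 2" and "m \<noteq> 0"
  shows "\<exists>k. d = k ^ 2"
proof -
  have "is_nth_power 2 (d * m ^ 2)" using assms(1) by (simp add: is_nth_powerI)
  then have "is_nth_power 2 d"
    using assms(2) is_nth_power_mult_cancel_right[of 2 "m ^ 2" d] by auto
  then show ?thesis by (auto simp: is_nth_power_def)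
qed

lemma of_int_add_mult_csqrt_eq_iff:
  fixes d A B C D :: int
  assumes "\<not> (\<exists>k. d = k ^ 2)"
  shows "of_int A + of_int B * csqrt (of_int d) = of_int C + of_int D * csqrt (of_int d)
         \<longleftrightarrow> A = C \<and> B = D"
proof
  let ?s = "csqrt (of_int d)"
  assume eq: "of_int A + of_int B * ?s = of_int C + of_int D * ?s"
  have "B = D"
  proof (rule ccontr)
    assume "B \<noteq> D"
    have "of_int (A - C) = of_int (D - B) * ?s" using eq by (simp add: algebra_simps)
    then have "(of_int (A - C)) ^ 2 = (of_int (D - B)) ^ 2 * ?s ^ 2"
      by (simp add: power_mult_distrib)
    then have "(of_int ((A - C) ^ 2) :: complex) = of_int (d * (D - B) ^ 2)"
      by (simp add: algebra_simps)
    then have "d * (D - B) ^ 2 = (A - C) ^ 2" by (metis of_int_eq_iff)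
    then show False
      using square_if_mult_square_eq_square \<open>B \<noteq> D\<close> assms by (metis eq_iff_diff_eq_0)
  qed
  with eq show "A = C \<and> B = D" by simp
qed simp

lemma mult_half_square_expand:
  fixes s :: "'a :: field_char_0" and a B d t u :: int
  assumes "s ^ 2 = of_int d"
  shows "4 * ((of_int a + of_int B * s) * ((of_int t + of_int u * s) / 2) ^ 2)
         = of_int (a * (t ^ 2 + u ^ 2 * d) + 2 * B * d * t * u)
           + of_int (2 * a * t * u + B * (t ^ 2 + u ^ 2 * d)) * s"
proof -
  have "4 * ((of_int a + of_int B * s) * ((of_int t + of_int u * s) / 2) ^ 2)
        = (of_int a + of_int B * s) * (of_int t + of_int u * s) ^ 2"
    by (simp add: power_divide)
  also have "\<dots> = of_int a * of_int t ^ 2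
                   + (of_int a * of_int u ^ 2 + 2 * of_int B * of_int t * of_int u) * s ^ 2
                   + (2 * of_int a * of_int t * of_int u + of_int B * of_int t ^ 2) * s
                   + of_int B * of_int u ^ 2 * s ^ 2 * s"
    by (simp add: algebra_simps power2_eq_square)
  finally show ?thesis
    unfolding assms by (simp add: algebra_simps)
qed

lemma coprime_four_if_odd:
  fixes z :: int
  assumes "odd z"
  shows "coprime 4 z"
  using assms coprime_power_left_iff[of 2 2 z] by simp

lemma four_dvd_if_even_t_odd_u_odd_a:
  fixes a b d t u :: int
  assumes "4 dvd a * (t ^ 2 + u ^ 2 * d) + 2 * b ^ 2 * d * t * u"
    and "even t" and "odd u" and "odd a"
  shows "4 dvd d"
proof -
  obtain m where "t = 2 * m" using \<open>even t\<close> by blast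
  then have "a * (t ^ 2 + u ^ 2 * d) + 2 * b ^ 2 * d * t * u
             = 4 * (a * m ^ 2 + b ^ 2 * d * m * u) + (a * u ^ 2) * d"
    by (simp add: algebra_simps power2_eq_square)
  with assms(1) have "4 dvd (a * u ^ 2) * d" by (simp add: dvd_add_right_iff)
  moreover have "coprime 4 (a * u ^ 2)"
    using assms(3,4) by (intro coprime_four_if_odd) simp
  ultimately show "4 dvd d" using coprime_dvd_mult_right_iff by blast
qed

lemma even_b_if_odd_t_even_u:
  fixes a b d t u :: int
  assumes "even (2 * a * t * u + b ^ 2 * (t ^ 2 + u ^ 2 * d))"
    and "odd t" and "even u"
  shows "even b"
  using assms by (auto simp: power2_eq_square)

lemma even_add_if_odd_t_odd_u:
  fixes a b d t u :: int
  assumes x_eq: "4 dvd a * (t ^ 2 + u ^ 2 * d) + 2 * b ^ 2 * d * t * u"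
    and y_eq: "4 dvd 2 * a * t * u + b ^ 2 * (t ^ 2 + u ^ 2 * d)"
    and "odd t" and "odd u"
  shows "even (a + b)"
proof (rule ccontr)
  assume "odd (a + b)"
  then consider "even b" "odd a" | "odd b" "even a" by auto
  then show False
  proof cases
    case 1
    then obtain c where "b = 2 * c" by blast
    with y_eq have "4 dvd 2 * (a * t * u) + 4 * (c ^ 2 * (t ^ 2 + u ^ 2 * d))"
      by (simp add: algebra_simps power2_eq_square)
    then have "even (a * t * u)"
      using dvd_times_left_cancel_iff[of 2 2 "a * t * u"] by (simp add: dvd_add_left_iff)
    with 1 \<open>odd t\<close> \<open>odd u\<close> show False by simp
  next
    case 2
    then obtain k where k: "a = 2 * k" by blast
    with y_eq have "4 dvd b ^ 2 * (t ^ 2 + u ^ 2 * d)"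
      by (simp add: algebra_simps dvd_add_right_iff)
    moreover have "coprime 4 (b ^ 2)" using 2 by (intro coprime_four_if_odd) simp
    ultimately obtain w where w: "t ^ 2 + u ^ 2 * d = 4 * w"
      using coprime_dvd_mult_right_iff by blast
    with k have "a * (t ^ 2 + u ^ 2 * d) + 2 * b ^ 2 * d * t * u
                 = 2 * (b ^ 2 * d * t * u) + 4 * (2 * k * w)"
      by simp
    with x_eq have "4 dvd 2 * (b ^ 2 * d * t * u) + 4 * (2 * k * w)" by simp
    then have "even (b ^ 2 * d * t * u)"
      using dvd_times_left_cancel_iff[of 2 2 "b ^ 2 * d * t * u"] by (simp add: dvd_add_left_iff)
    with 2 \<open>odd t\<close> \<open>odd u\<close> have "even d" by simp
    moreover from w have "even (t ^ 2 + u ^ 2 * d)" by (simp add: dvd_mult2)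
    ultimately show False using \<open>odd t\<close> by simp
  qed
qed

lemma square_sub_mod_four_if_odd:
  fixes a c d :: int
  assumes "odd a" and "4 dvd d"
  shows "(a ^ 2 - c * d) mod 4 = 1"
proof -
  obtain k where "a = 2 * k + 1" using \<open>odd a\<close> oddE by blast
  moreover obtain e where "d = 4 * e" using \<open>4 dvd d\<close> by blast
  ultimately have "a ^ 2 - c * d = 4 * (k ^ 2 + k - c * e) + 1"
    by (simp add: algebra_simps power2_eq_square)
  then show ?thesis by presburger
qed

lemma even_t_b2_add_a_u:
  fixes a b d t u :: int
  assumes x_eq: "4 dvd a * (t ^ 2 + u ^ 2 * d) + 2 * b ^ 2 * d * t * u"
    and y_eq: "4 dvd 2 * a * t * u + b ^ 2 * (t ^ 2 + u ^ 2 * d)"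
    and exc: "\<not> ((a ^ 2 - b ^ 4 * d) mod 4 = 1 \<and> 4 dvd d)"
  shows "even (t * b ^ 2 + a * u)"
proof (cases "even t"; cases "even u")
  assume "even t" "odd u"
  show ?thesis
  proof (rule ccontr)
    assume "odd (t * b ^ 2 + a * u)"
    with \<open>even t\<close> have "odd a" by auto
    with x_eq \<open>even t\<close> \<open>odd u\<close> have "4 dvd d" by (rule four_dvd_if_even_t_odd_u_odd_a)
    with \<open>odd a\<close> exc show False using square_sub_mod_four_if_odd by blast
  qed
next
  assume "odd t" "even u"
  moreover have "even (2 * a * t * u + b ^ 2 * (t ^ 2 + u ^ 2 * d))"
    using y_eq by (rule dvd_trans[rotated]) simp
  ultimately have "even b" using even_b_if_odd_t_even_u by blast
  with \<open>even u\<close> show ?thesis by simp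
next
  assume "odd t" "odd u"
  with x_eq y_eq have "even (a + b)" by (rule even_add_if_odd_t_odd_u)
  with \<open>odd t\<close> \<open>odd u\<close> show ?thesis by auto
qed simp

theorem lemma3p4:
  fixes a b d t u x y :: int
  assumes "a \<noteq> 0" and "b > 0"
    and "\<not> (\<exists>k::int. d = k ^ 2)"
    and "\<not> (\<exists>k::int. a ^ 2 - b ^ 4 * d = k ^ 2)"
    and "t \<noteq> 0" and "u \<noteq> 0"
    and "algebraic_int ((of_int t + of_int u * csqrt (of_int d)) / 2 :: complex)"
    and "x \<noteq> 0" and "y > 0"
    and "of_int x + of_int (y ^ 2) * csqrt (of_int d)
         = (of_int a + of_int (b ^ 2) * csqrt (of_int d))
           * ((of_int t + of_int u * csqrt (of_int d)) / 2) ^ 2"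
  shows "\<not> ((a ^ 2 - b ^ 4 * d) mod 4 = 1 \<and> 4 dvd d)
         \<longrightarrow> even (gcd (t * b ^ 2 + a * u + 2 * b * y) (t * b ^ 2 + a * u - 2 * b * y))"
proof
  assume exc: "\<not> ((a ^ 2 - b ^ 4 * d) mod 4 = 1 \<and> 4 dvd d)"
  let ?s = "csqrt (of_int d)"
  have "of_int (4 * x) + of_int (4 * y ^ 2) * ?s = 4 * (of_int x + of_int (y ^ 2) * ?s)"
    by (simp add: algebra_simps)
  also have "\<dots> = of_int (a * (t ^ 2 + u ^ 2 * d) + 2 * b ^ 2 * d * t * u)
                   + of_int (2 * a * t * u + b ^ 2 * (t ^ 2 + u ^ 2 * d)) * ?s"
    unfolding assms(10) by (rule mult_half_square_expand) simp
  finally have "4 * x = a * (t ^ 2 + u ^ 2 * d) + 2 * b ^ 2 * d * t * u"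
    and "4 * y ^ 2 = 2 * a * t * u + b ^ 2 * (t ^ 2 + u ^ 2 * d)"
    using of_int_add_mult_csqrt_eq_iff[OF assms(3)] by blast+
  then have "even (t * b ^ 2 + a * u)"
    using even_t_b2_add_a_u exc by (metis dvd_triv_left)
  then show "even (gcd (t * b ^ 2 + a * u + 2 * b * y) (t * b ^ 2 + a * u - 2 * b * y))"
    by simp
qed

end
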